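(* Let $\pi=(d_1\le\cdots\le d_n)$ be a graphical sequence and let $g(\pi)=\max\{i\in\mathbb{Z}^+ : f(i)<\infty\}$, with $f$ as defined in the context. Then there is a graphical sequence $\pi'$ of length $n$ with $\pi'\le\pi$ termwise which has a realization that is a disjoint union of exactly $g(\pi)$ cliques (so this realization has independence number $g(\pi)$). Consequently, for any integer $k>g(\pi)$, $\pi$ is minorized by a graphical sequence having a realization with independence number less than $k$.
   Context: Graphs are finite and simple; a graphical sequence is a nondecreasing integer sequence that is the degree sequence of some graph. Define $f:\mathbb{Z}^+\to\{d_1,\dots,d_n,\infty\}$ recursively, tracking an index: $f(1)=d_1$ (with index $j_1=1$); if $f(i)=d_{j_i}$ is finite then, if $j_i+f(i)+1\le n$, set $j_{i+1}=j_i+f(i)+1$ and $f(i+1)=d_{j_{i+1}}$, and otherwise $f(i+1)=\infty$; if $f(i)=\infty$ then $f(i+1)=\infty$. *)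

theory Defs
  imports Main "HOL-Library.Extended_Nat"
begin

text \<open>Sequences d_1..d_n are lists d of length n; d_j is d ! (j - 1).
  Graphs on vertex set {0..<n} are symmetric irreflexive relations E;
  vertex i (0-based) corresponds to term d_(i+1).\<close>

definition realizes :: "(nat \<Rightarrow> nat \<Rightarrow> bool) \<Rightarrow> nat list \<Rightarrow> bool" where
  "realizes E d \<longleftrightarrow>
     (\<forall>i j. E i j \<longrightarrow> i < length d \<and> j < length d) \<and>
     (\<forall>i j. E i j \<longrightarrow> E j i) \<and> (\<forall>i. \<not> E i i) \<and>
     (\<forall>i < length d. card {j. j < length d \<and> E i j} = d ! i)"

definition graphical :: "nat list \<Rightarrow> bool" where
  "graphical d \<longleftrightarrow> sorted d \<and> (\<exists>E. realizes E d)"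

text \<open>Index j_i (1-based) of the recursion; idx d m is j_(m+1), None once f is infinite.\<close>
primrec idx :: "nat list \<Rightarrow> nat \<Rightarrow> nat option" where
  "idx d 0 = Some 1"
| "idx d (Suc m) = (case idx d m of None \<Rightarrow> None
     | Some j \<Rightarrow> (if j + d ! (j - 1) + 1 \<le> length d then Some (j + d ! (j - 1) + 1) else None))"

definition fseq :: "nat list \<Rightarrow> nat \<Rightarrow> enat" where
  "fseq d i = (case idx d (i - 1) of None \<Rightarrow> \<infinity> | Some j \<Rightarrow> enat (d ! (j - 1)))"

definition gval :: "nat list \<Rightarrow> nat" where
  "gval d = Max {i. 1 \<le> i \<and> fseq d i < \<infinity>}"

definition minorizes :: "nat list \<Rightarrow> nat list \<Rightarrow> bool" where
  "minorizes d' d \<longleftrightarrow> length d' = length d \<and> (\<forall>i < length d. d' ! i \<le> d ! i)"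

definition disjoint_union_of_cliques :: "nat \<Rightarrow> (nat \<Rightarrow> nat \<Rightarrow> bool) \<Rightarrow> nat \<Rightarrow> bool" where
  "disjoint_union_of_cliques n E k \<longleftrightarrow>
     (\<exists>c :: nat \<Rightarrow> nat. c ` {..<n} = {..<k} \<and>
        (\<forall>i < n. \<forall>j < n. E i j \<longleftrightarrow> i \<noteq> j \<and> c i = c j))"

definition independence_number :: "nat \<Rightarrow> (nat \<Rightarrow> nat \<Rightarrow> bool) \<Rightarrow> nat" where
  "independence_number n E =
     Max {card S | S. S \<subseteq> {..<n} \<and> (\<forall>x\<in>S. \<forall>y\<in>S. \<not> E x y)}"

end

theory Submission
  imports Defs "HOL-Combinatorics.List_Permutation"
begin

(* Cut the sorted sequence d greedily into consecutive blocks: the first block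
   consists of the first d_1 + 1 positions, and the rest of the sequence is cut recursively.
   The first positions of the blocks are exactly the indices j_1, j_2, ... of the recursion
   defining f, so there are g(d) blocks; the last one may be truncated.  Every vertex v lies in
   a block of size at most d_j + 1, where j <= v is the block's first position, hence at most
   d_v + 1 because d is sorted.  Making every block a clique therefore gives a graph with
   exactly g(d) cliques whose degree sequence w lies termwise below d.  Since w need not be
   sorted, we relabel the vertices so that the degrees become sort w, which still lies below d
   (lemma sort_nth_le).  The independence number of a disjoint union of k cliques is k. *)

section \<open>The recursion defining f\<close>

definition finite_terms :: "nat list \<Rightarrow> nat \<Rightarrow> bool" where
  "finite_terms d k \<longleftrightarrow> (\<forall>m. idx d m \<noteq> None \<longleftrightarrow> m < k)"

lemma idx_ge1: "idx d m = Some j \<Longrightarrow> 1 \<le> j"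
  by (induction m arbitrary: j) (auto split: option.splits if_splits)

lemma idx_None_mono: "idx d m = None \<Longrightarrow> m \<le> m' \<Longrightarrow> idx d m' = None"
  by (induction m') (auto simp: le_Suc_eq)

lemma idx_Suc_drop:
  assumes "d ! 0 + 1 < length d"
  shows "idx d (Suc m) = map_option (\<lambda>j. j + (d ! 0 + 1)) (idx (drop (d ! 0 + 1) d) m)"
proof (induction m)
  case 0
  then show ?case using assms by simp
next
  case (Suc m)
  show ?case
  proof (cases "idx (drop (d ! 0 + 1) d) m")
    case None
    then show ?thesis using Suc by simp
  next
    case (Some j)
    have "1 \<le> j" using idx_ge1[OF Some] .
    then have "drop (d ! 0 + 1) d ! (j - 1) = d ! (j + (d ! 0 + 1) - 1)"
      using assms by (simp add: add.commute)
    then show ?thesis using Suc Some \<open>1 \<le> j\<close> by auto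
  qed
qed

lemma finite_terms_last:
  assumes "length d \<le> d ! 0 + 1"
  shows "finite_terms d 1"
proof -
  have "idx d 1 = None" using assms by simp
  then have "idx d (Suc m) = None" for m by (rule idx_None_mono) simp
  then show ?thesis
    unfolding finite_terms_def by (metis less_one not0_implies_Suc option.simps(3) idx.simps(1))
qed

lemma finite_terms_step:
  assumes "d ! 0 + 1 < length d" and "finite_terms (drop (d ! 0 + 1) d) k"
  shows "finite_terms d (Suc k)"
  unfolding finite_terms_def
proof
  fix m
  show "idx d m \<noteq> None \<longleftrightarrow> m < Suc k"
    using assms idx_Suc_drop[OF assms(1)] unfolding finite_terms_def by (cases m) auto
qed

lemma gval_eq:
  assumes "finite_terms d k"
  shows "gval d = k"
proof -
  have "idx d 0 \<noteq> None" by simp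
  then have "0 < k" using assms unfolding finite_terms_def by blast
  then have k: "1 \<le> k" by simp
  have "fseq d i < \<infinity> \<longleftrightarrow> idx d (i - 1) \<noteq> None" for i
    by (auto simp: fseq_def split: option.splits)
  then have "{i. 1 \<le> i \<and> fseq d i < \<infinity>} = {1..k}"
    using assms by (auto simp: finite_terms_def)
  then have "gval d = Max {1..k}" by (simp add: gval_def)
  also have "\<dots> = k" using k by (intro Max_eqI) auto
  finally show ?thesis .
qed

section \<open>Colourings and the greedy block colouring\<close>

definition class_size :: "nat \<Rightarrow> (nat \<Rightarrow> nat) \<Rightarrow> nat \<Rightarrow> nat" where
  "class_size n c v = card {u. u < n \<and> c u = c v}"

definition prepend_class :: "nat \<Rightarrow> (nat \<Rightarrow> nat) \<Rightarrow> nat \<Rightarrow> nat" where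
  "prepend_class a c v = (if v < a then 0 else Suc (c (v - a)))"

lemma prepend_class_image:
  assumes "0 < a" "a \<le> n" "c ` {..<n - a} = {..<k}"
  shows "prepend_class a c ` {..<n} = {..<Suc k}"
proof (intro set_eqI iffI)
  fix x assume "x \<in> prepend_class a c ` {..<n}"
  then show "x \<in> {..<Suc k}"
    using assms(3) by (fastforce simp: prepend_class_def split: if_splits)
next
  fix x assume x: "x \<in> {..<Suc k}"
  show "x \<in> prepend_class a c ` {..<n}"
  proof (cases x)
    case 0
    then show ?thesis using assms(1,2) by (force simp: prepend_class_def)
  next
    case (Suc y)
    then obtain u where "u < n - a" "c u = y" using x assms(3) by (metis imageE lessThan_iff Suc_less_eq)
    then have "prepend_class a c (u + a) = x" "u + a < n" using Suc by (auto simp: prepend_class_def)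
    then show ?thesis by force
  qed
qed

lemma class_size_prepend_first:
  assumes "v < a" "a \<le> n"
  shows "class_size n (prepend_class a c) v = a"
proof -
  have "{u. u < n \<and> prepend_class a c u = prepend_class a c v} = {..<a}"
    using assms by (auto simp: prepend_class_def)
  then show ?thesis by (simp add: class_size_def)
qed

lemma class_size_prepend_rest:
  assumes "a \<le> v" "v < n"
  shows "class_size n (prepend_class a c) v = class_size (n - a) c (v - a)"
proof -
  have "{u. u < n \<and> prepend_class a c u = prepend_class a c v}
        = (\<lambda>u. u + a) ` {u. u < n - a \<and> c u = c (v - a)}"
  proof (intro set_eqI iffI)
    fix u assume u: "u \<in> {u. u < n \<and> prepend_class a c u = prepend_class a c v}"
    then have "a \<le> u" using assms(1) by (auto simp: prepend_class_def split: if_splits)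
    then have "u = (u - a) + a" "u - a \<in> {u. u < n - a \<and> c u = c (v - a)}"
      using u assms by (auto simp: prepend_class_def)
    then show "u \<in> (\<lambda>u. u + a) ` {u. u < n - a \<and> c u = c (v - a)}" by blast
  next
    fix u assume "u \<in> (\<lambda>u. u + a) ` {u. u < n - a \<and> c u = c (v - a)}"
    then show "u \<in> {u. u < n \<and> prepend_class a c u = prepend_class a c v}"
      using assms by (auto simp: prepend_class_def)
  qed
  then show ?thesis by (simp add: class_size_def card_image)
qed

lemma greedy_block_colouring:
  assumes "sorted d" "d \<noteq> []"
  shows "\<exists>k c. finite_terms d k \<and> c ` {..<length d} = {..<k}
           \<and> (\<forall>v < length d. class_size (length d) c v \<le> Suc (d ! v))"
  using assms
proof (induction "length d" arbitrary: d rule: less_induct)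
  case less
  define n where "n = length d"
  define a where "a = d ! 0 + 1"
  have first_le: "d ! 0 \<le> d ! v" if "v < n" for v
    using less.prems(1) that by (simp add: n_def sorted_iff_nth_mono)
  show ?case
  proof (cases "a < n")
    case False
    have "(\<lambda>_. 0::nat) ` {..<n} = {..<1}" using less.prems(2) by (auto simp: n_def)
    moreover have "class_size n (\<lambda>_. 0) v \<le> Suc (d ! v)" if "v < n" for v
      using False first_le[OF that] by (simp add: class_size_def a_def)
    ultimately show ?thesis
      using finite_terms_last[of d] False by (auto simp: a_def n_def)
  next
    case True
    define r where "r = drop a d"
    have "length r < n" "sorted r" "r \<noteq> []"
      using True less.prems by (auto simp: r_def n_def a_def sorted_wrt_drop)
    then obtain k c where k: "finite_terms r k" and c: "c ` {..<length r} = {..<k}"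
      and sizes: "\<forall>v < length r. class_size (length r) c v \<le> Suc (r ! v)"
      using less.hyps n_def by blast
    have "finite_terms d (Suc k)" using finite_terms_step True k by (simp add: a_def n_def r_def)
    moreover have "prepend_class a c ` {..<n} = {..<Suc k}"
      using prepend_class_image c True by (simp add: a_def r_def n_def)
    moreover have "class_size n (prepend_class a c) v \<le> Suc (d ! v)" if "v < n" for v
    proof (cases "v < a")
      case True
      then show ?thesis using class_size_prepend_first \<open>a < n\<close> first_le[OF that] by (simp add: a_def)
    next
      case False
      then have "class_size n (prepend_class a c) v = class_size (length r) c (v - a)"
        using class_size_prepend_rest that by (simp add: r_def n_def)
      also have "\<dots> \<le> Suc (d ! v)"
        using sizes[rule_format, of "v - a"] False that by (simp add: r_def n_def)
      finally show ?thesis .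
    qed
    ultimately show ?thesis unfolding n_def by blast
  qed
qed

section \<open>The graph of a colouring\<close>

definition same_colour :: "nat \<Rightarrow> (nat \<Rightarrow> nat) \<Rightarrow> nat \<Rightarrow> nat \<Rightarrow> bool" where
  "same_colour n c i j \<longleftrightarrow> i < n \<and> j < n \<and> i \<noteq> j \<and> c i = c j"

definition class_degrees :: "nat \<Rightarrow> (nat \<Rightarrow> nat) \<Rightarrow> nat list" where
  "class_degrees n c = map (\<lambda>v. class_size n c v - 1) [0..<n]"

lemma same_colour_realizes: "realizes (same_colour n c) (class_degrees n c)"
  unfolding realizes_def
proof (intro conjI allI impI)
  fix i assume i: "i < length (class_degrees n c)"
  have "{j. j < length (class_degrees n c) \<and> same_colour n c i j} = {u. u < n \<and> c u = c i} - {i}"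
    using i by (auto simp: class_degrees_def same_colour_def)
  then show "card {j. j < length (class_degrees n c) \<and> same_colour n c i j} = class_degrees n c ! i"
    using i by (simp add: class_degrees_def class_size_def)
qed (auto simp: same_colour_def class_degrees_def)

lemma same_colour_cliques:
  "c ` {..<n} = {..<k} \<Longrightarrow> disjoint_union_of_cliques n (same_colour n c) k"
  unfolding disjoint_union_of_cliques_def same_colour_def by blast

text \<open>An independent set meets each colour class at most once, and a choice of one vertex per
  colour is independent.\<close>

lemma same_colour_independence_number:
  assumes c: "c ` {..<n} = {..<k}"
  shows "independence_number n (same_colour n c) = k"
proof -
  define P where "P = {card S |S. S \<subseteq> {..<n} \<and> (\<forall>x\<in>S. \<forall>y\<in>S. \<not> same_colour n c x y)}"
  have bound: "s \<le> k" if s: "s \<in> P" for s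
  proof -
    obtain S where S: "s = card S" "S \<subseteq> {..<n}" "\<forall>x\<in>S. \<forall>y\<in>S. \<not> same_colour n c x y"
      using s unfolding P_def by blast
    then have "inj_on c S" by (auto simp: inj_on_def same_colour_def)
    moreover have "c ` S \<subseteq> {..<k}" using S(2) c by blast
    ultimately show ?thesis using S(1) by (metis card_image card_lessThan card_mono finite_lessThan)
  qed
  define rep where "rep = inv_into {..<n} c"
  have rep: "rep m < n" "c (rep m) = m" if "m < k" for m
    using that c inv_into_into[of m c "{..<n}"] f_inv_into_f[of m c "{..<n}"]
    by (auto simp: rep_def)
  have "inj_on rep {..<k}" unfolding rep_def using c by (simp add: inj_on_inv_into)
  then have "k = card (rep ` {..<k})" by (simp add: card_image)
  moreover have "rep ` {..<k} \<subseteq> {..<n}" using rep by auto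
  moreover have "\<forall>x\<in>rep ` {..<k}. \<forall>y\<in>rep ` {..<k}. \<not> same_colour n c x y"
    using rep by (auto simp: same_colour_def)
  ultimately have "k \<in> P" unfolding P_def by blast
  moreover have "finite P" using bound by (meson finite_nat_set_iff_bounded_le)
  ultimately show ?thesis
    unfolding independence_number_def P_def[symmetric] using bound by (intro Max_eqI) auto
qed

section \<open>Relabelling vertices and sorting degree sequences\<close>

lemma class_size_relabel:
  assumes f: "bij_betw f {..<n} {..<n}" and v: "v < n"
  shows "class_size n (c \<circ> f) v = class_size n c (f v)"
proof -
  let ?A = "{u. u < n \<and> (c \<circ> f) u = (c \<circ> f) v}"
  have "{u. u < n \<and> c u = c (f v)} = f ` ?A"
  proof (intro set_eqI iffI)
    fix u assume u: "u \<in> {u. u < n \<and> c u = c (f v)}"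
    then have "u \<in> f ` {..<n}" using bij_betw_imp_surj_on[OF f] by simp
    then obtain w where "w < n" "u = f w" by blast
    then show "u \<in> f ` ?A" using u by (intro image_eqI[of _ _ w]) auto
  next
    fix u assume "u \<in> f ` ?A"
    then obtain w where "w \<in> ?A" "u = f w" by blast
    moreover have "f w < n" using bij_betwE[OF f] \<open>w \<in> ?A\<close> by simp
    ultimately show "u \<in> {u. u < n \<and> c u = c (f v)}" by simp
  qed
  moreover have "inj_on f ?A"
    using bij_betw_imp_inj_on[OF f] by (rule inj_on_subset) auto
  ultimately show ?thesis by (simp add: class_size_def card_image)
qed

lemma class_degrees_sort:
  "\<exists>f. bij_betw f {..<n} {..<n} \<and> class_degrees n (c \<circ> f) = sort (class_degrees n c)"
proof -
  obtain f where f: "bij_betw f {..<n} {..<n}"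
    and nth: "\<forall>i<n. sort (class_degrees n c) ! i = class_degrees n c ! f i"
    using permutation_Ex_bij[of "sort (class_degrees n c)" "class_degrees n c"]
    by (auto simp: class_degrees_def)
  have "class_degrees n (c \<circ> f) = sort (class_degrees n c)"
  proof (rule nth_equalityI)
    fix i assume "i < length (class_degrees n (c \<circ> f))"
    then have "i < n" "f i < n" using f by (auto simp: class_degrees_def bij_betw_def)
    then show "class_degrees n (c \<circ> f) ! i = sort (class_degrees n c) ! i"
      using nth class_size_relabel[OF f] by (simp add: class_degrees_def)
  qed (simp add: class_degrees_def)
  then show ?thesis using f by blast
qed

lemma sorted_filter_le_length:
  fixes s :: "'a::linorder list"
  assumes "sorted s" "i < length s" "t < s ! i"
  shows "length (filter (\<lambda>y. y \<le> t) s) \<le> i"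
proof -
  have "filter (\<lambda>y. y \<le> t) (drop i s) = []"
  proof (rule filter_False)
    show "\<forall>y\<in>set (drop i s). \<not> y \<le> t"
    proof
      fix y assume "y \<in> set (drop i s)"
      then obtain j where "j < length s - i" "y = s ! (i + j)"
        by (auto simp: in_set_conv_nth)
      then have "s ! i \<le> y" using assms(1) by (simp add: sorted_iff_nth_mono)
      then show "\<not> y \<le> t" using assms(3) by simp
    qed
  qed
  then have "length (filter (\<lambda>y. y \<le> t) s) = length (filter (\<lambda>y. y \<le> t) (take i s))"
    by (metis append_Nil2 append_take_drop_id filter_append)
  also have "\<dots> \<le> i" by (metis length_filter_le length_take min.bounded_iff)
  finally show ?thesis .
qed

text \<open>Sorting a list that lies termwise below a sorted list keeps it termwise below: the
  first i + 1 entries of w are at most d_i, so at least i + 1 entries of sort w are.\<close>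

lemma sort_nth_le:
  fixes w d :: "'a::linorder list"
  assumes "sorted d" "length w = length d" "\<forall>j<length d. w ! j \<le> d ! j" "i < length d"
  shows "sort w ! i \<le> d ! i"
proof (rule ccontr)
  assume "\<not> sort w ! i \<le> d ! i"
  then have gt: "d ! i < sort w ! i" by simp
  have "\<forall>y\<in>set (take (Suc i) w). y \<le> d ! i"
  proof
    fix y assume "y \<in> set (take (Suc i) w)"
    then obtain j where "j < Suc i" "y = w ! j"
      using assms(2,4) by (auto simp: in_set_conv_nth)
    then have "j < length d" "w ! j \<le> d ! j" "d ! j \<le> d ! i"
      using assms(1,3,4) by (auto simp: sorted_iff_nth_mono)
    then show "y \<le> d ! i" using \<open>y = w ! j\<close> by simp
  qed
  then have "Suc i = length (filter (\<lambda>y. y \<le> d ! i) (take (Suc i) w))"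
    using assms(2,4) by simp
  also have "\<dots> \<le> length (filter (\<lambda>y. y \<le> d ! i) w)"
    by (metis append_take_drop_id filter_append length_append le_add1)
  also have "\<dots> = length (filter (\<lambda>y. y \<le> d ! i) (sort w))"
    by (metis mset_filter mset_sort size_mset)
  also have "\<dots> \<le> i"
    using sorted_filter_le_length[OF sorted_sort _ gt] assms(2,4) by simp
  finally show False by simp
qed

lemma sorted_clique_minorant:
  assumes "sorted d" "d \<noteq> []"
  shows "\<exists>c. c ` {..<length d} = {..<gval d} \<and> sorted (class_degrees (length d) c)
             \<and> minorizes (class_degrees (length d) c) d"
proof -
  define n where "n = length d"
  obtain k c where k: "finite_terms d k" and c: "c ` {..<n} = {..<k}"
    and sizes: "\<forall>v < n. class_size n c v \<le> Suc (d ! v)"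
    using greedy_block_colouring[OF assms] n_def by blast
  obtain f where f: "bij_betw f {..<n} {..<n}"
    and relabelled: "class_degrees n (c \<circ> f) = sort (class_degrees n c)"
    using class_degrees_sort by blast
  have "(c \<circ> f) ` {..<n} = c ` (f ` {..<n})" by (simp add: image_comp)
  then have colours: "(c \<circ> f) ` {..<n} = {..<gval d}"
    using c gval_eq[OF k] bij_betw_imp_surj_on[OF f] by simp
  have "\<forall>j<n. class_degrees n c ! j \<le> d ! j"
    using sizes by (simp add: class_degrees_def le_diff_conv)
  then have minor: "minorizes (class_degrees n (c \<circ> f)) d"
    using sort_nth_le[OF assms(1)] unfolding minorizes_def relabelled
    by (simp add: class_degrees_def n_def)
  have "sorted (class_degrees n (c \<circ> f))" using relabelled by simp
  with colours minor show ?thesis unfolding n_def by (intro exI[of _ "c \<circ> f"]) simp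
qed

theorem mainTheorem8:
  fixes d :: "nat list"
  assumes "graphical d" and "length d \<ge> 1"
  shows "(\<exists>d'. graphical d' \<and> minorizes d' d \<and>
            (\<exists>E. realizes E d' \<and> disjoint_union_of_cliques (length d) E (gval d)
                 \<and> independence_number (length d) E = gval d))
       \<and> (\<forall>k::nat. k > gval d \<longrightarrow>
            (\<exists>d'. graphical d' \<and> minorizes d' d \<and>
               (\<exists>E. realizes E d' \<and> independence_number (length d) E < k)))"
proof -
  have "sorted d" "d \<noteq> []" using assms by (auto simp: graphical_def)
  then obtain c where c: "c ` {..<length d} = {..<gval d}"
    and sorted: "sorted (class_degrees (length d) c)"
    and minor: "minorizes (class_degrees (length d) c) d"
    using sorted_clique_minorant by blast
  define d' where "d' = class_degrees (length d) c"
  define E where "E = same_colour (length d) c"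
  have realizes: "realizes E d'"
    unfolding E_def d'_def by (rule same_colour_realizes)
  then have graphical: "graphical d'"
    using sorted by (auto simp: graphical_def d'_def)
  have cliques: "disjoint_union_of_cliques (length d) E (gval d)"
    using same_colour_cliques[OF c] by (simp add: E_def)
  have alpha: "independence_number (length d) E = gval d"
    using same_colour_independence_number[OF c] by (simp add: E_def)
  show ?thesis
  proof (intro conjI allI impI)
    show "\<exists>d'. graphical d' \<and> minorizes d' d \<and>
            (\<exists>E. realizes E d' \<and> disjoint_union_of_cliques (length d) E (gval d)
                 \<and> independence_number (length d) E = gval d)"
      using graphical minor realizes cliques alpha unfolding d'_def by blast
  next
    fix k :: nat assume "gval d < k"
    then have "independence_number (length d) E < k" using alpha by simp
    then show "\<exists>d'. graphical d' \<and> minorizes d' d \<and>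
               (\<exists>E. realizes E d' \<and> independence_number (length d) E < k)"
      using graphical minor realizes unfolding d'_def by blast
  qed
qed

end
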